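(* Let $N\ge0$ be an integer and $a,b,c$ complex numbers such that $N+c-a-b\ne0$ and all denominators below are nonzero. Then \[ {}_{2}F_{1}^{[N]}\left(\begin{matrix}a,b\\ c\end{matrix};\frac{N}{N+c-a-b}\right) =\frac{(c-a)_{N}(c-b)_{N}}{(c)_{N}(c-a-b)_{N}}. \]
   Context: $(x)_m=x(x+1)\cdots(x+m-1)$ is the rising factorial, $(x)_0=1$. For $N\ge0$, \[ {}_{2}F_{1}^{[N]}\left(\begin{matrix}a,b\\ c\end{matrix};z\right)=\sum_{m=0}^{N}\frac{(a)_m(b)_m}{(c)_m\, m!}\,\frac{(N+1-m)_m}{(Nz^{-1}-m)_m}. \] *)

theory Defs
  imports Complex_Main
begin

definition hyp2F1N :: "nat \<Rightarrow> complex \<Rightarrow> complex \<Rightarrow> complex \<Rightarrow> complex \<Rightarrow> complex" where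
  "hyp2F1N N a b c z =
     (\<Sum>m = 0..N. pochhammer a m * pochhammer b m / (pochhammer c m * fact m)
        * pochhammer (of_nat (N + 1 - m)) m
        / pochhammer (of_nat N * inverse z - of_nat m) m)"

end

theory Submission
  imports Defs "HOL-Computational_Algebra.Formal_Power_Series"
begin

text \<open>
  Writing \<open>s = N + c - a - b\<close>, the point \<open>z = N / s\<close> turns the sum into the balanced terminating
  series 3F2(a, b, -N; c, 1 - s; 1), and the Pfaff--Saalschuetz identity evaluates it.
  That identity follows from Chu--Vandermonde applied three times: expand \<open>(a)\<^sub>m / (1 - s)\<^sub>m\<close>
  as a terminating Vandermonde sum, swap the two summations, and sum the inner and then the
  outer series again by Vandermonde.
\<close>

lemma sum_atMost_triangle_swap:
  fixes f :: "nat \<Rightarrow> nat \<Rightarrow> 'a::comm_monoid_add"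
  shows "(\<Sum>m\<le>n. \<Sum>j\<le>m. f m j) = (\<Sum>j\<le>n. \<Sum>k\<le>n - j. f (j + k) j)"
proof -
  have "{(j, k). j + k \<le> n} = Sigma {..n} (\<lambda>j. {..n - j})" by auto
  then show ?thesis
    using sum.triangle_reindex_eq[of "\<lambda>j k. f (j + k) j" n] by (simp add: sum.Sigma)
qed

lemma pochhammer_reflect:
  fixes x :: "'a::comm_ring_1"
  shows "pochhammer (1 - x - of_nat n) n = (-1) ^ n * pochhammer x n"
  using pochhammer_minus'[of "-x" n] by (simp add: algebra_simps)

lemma pochhammer_split_reflect:
  fixes x :: "'a::comm_ring_1"
  assumes "j \<le> n"
  shows "pochhammer x n = (-1) ^ j * pochhammer (1 - x - of_nat n) j * pochhammer x (n - j)"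
proof -
  have "pochhammer x n = pochhammer x (n - j) * pochhammer (x + of_nat (n - j)) j"
    using pochhammer_product'[of x "n - j" j] assms by simp
  moreover have "pochhammer (x + of_nat (n - j)) j = (-1) ^ j * pochhammer (1 - x - of_nat n) j"
    using pochhammer_reflect[of "1 - x - of_nat n" j] assms by (simp add: of_nat_diff algebra_simps)
  ultimately show ?thesis by (simp add: mult_ac)
qed

lemma pochhammer_minus_of_nat_add:
  "pochhammer (- of_nat (j + k)) j * fact k = ((-1) ^ j :: 'a::{comm_ring_1,semiring_char_0}) * fact (j + k)"
proof -
  have "(- of_nat (j + k) :: 'a) = 1 - (of_nat k + 1) - of_nat j"
    by simp
  then have "pochhammer (- of_nat (j + k)) j = (-1) ^ j * pochhammer (of_nat k + 1 :: 'a) j"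
    using pochhammer_reflect by metis
  moreover have "fact (k + j) = (fact k :: 'a) * pochhammer (of_nat k + 1) j"
    unfolding pochhammer_fact pochhammer_product' by (simp add: add.commute)
  ultimately show ?thesis by (simp add: mult_ac add.commute)
qed

lemma Vandermonde_pochhammer_atMost:
  fixes a c :: "'a::field_char_0"
  assumes "pochhammer c n \<noteq> 0"
  shows "(\<Sum>k\<le>n. pochhammer a k * pochhammer (- of_nat n) k / (fact k * pochhammer c k))
       = pochhammer (c - a) n / pochhammer c n"
proof -
  have "\<forall>i\<in>{0..<n}. c \<noteq> - of_nat i"
    using assms by (auto simp: pochhammer_eq_0_iff)
  from Vandermonde_pochhammer[OF this, of a] show ?thesis
    by (simp add: atMost_atLeast0)
qed

lemma hyp2F1N_eq_3F2_sum:
  "hyp2F1N N a b c z = (\<Sum>m\<le>N. pochhammer a m * pochhammer b m * pochhammer (- of_nat N) m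
      / (pochhammer c m * fact m * pochhammer (1 - of_nat N / z) m))"
  unfolding hyp2F1N_def atMost_atLeast0
proof (rule sum.cong[OF refl])
  fix m assume "m \<in> {0..N}"
  then have "of_nat (N + 1 - m) = 1 - (- of_nat N) - (of_nat m :: complex)"
    by (simp add: of_nat_diff)
  then have num: "pochhammer (of_nat (N + 1 - m)) m = (-1) ^ m * pochhammer (- of_nat N :: complex) m"
    using pochhammer_reflect by metis
  have den: "pochhammer (of_nat N * inverse z - of_nat m) m = (-1) ^ m * pochhammer (1 - of_nat N / z) m"
    using pochhammer_reflect[of "1 - of_nat N / z" m] by (simp add: divide_inverse)
  show "pochhammer a m * pochhammer b m / (pochhammer c m * fact m) * pochhammer (of_nat (N + 1 - m)) m
      / pochhammer (of_nat N * inverse z - of_nat m) m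
    = pochhammer a m * pochhammer b m * pochhammer (- of_nat N) m
      / (pochhammer c m * fact m * pochhammer (1 - of_nat N / z) m)"
    unfolding num den by (simp add: power_mult_distrib[symmetric] mult_ac)
qed

lemma saalschuetz_inner_sum:
  fixes b c :: "'a::field_char_0"
  assumes "j \<le> n" and c: "pochhammer c n \<noteq> 0"
  shows "(\<Sum>k\<le>n - j. pochhammer b (j + k) * pochhammer (- of_nat n) (j + k)
            / (pochhammer c (j + k) * fact (j + k))
            * pochhammer (1 + b - c - of_nat n) j * pochhammer (- of_nat (j + k)) j)
       = pochhammer b j * pochhammer (- of_nat n) j * pochhammer (c - b) n / pochhammer c n"
proof -
  define A where "A = (-1) ^ j * pochhammer (1 + b - c - of_nat n) j
      * pochhammer b j * pochhammer (- of_nat n) j / pochhammer c j"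
  have split_c: "pochhammer c n = pochhammer c j * pochhammer (c + of_nat j) (n - j)"
    using pochhammer_product[OF \<open>j \<le> n\<close>] .
  with c have cj: "pochhammer c j \<noteq> 0" and cjn: "pochhammer (c + of_nat j) (n - j) \<noteq> 0"
    by auto
  have shift_n: "- of_nat n + of_nat j = (- of_nat (n - j) :: 'a)"
    using \<open>j \<le> n\<close> by (simp add: of_nat_diff)
  have "pochhammer b (j + k) * pochhammer (- of_nat n) (j + k) / (pochhammer c (j + k) * fact (j + k))
          * pochhammer (1 + b - c - of_nat n) j * pochhammer (- of_nat (j + k)) j
      = A * (pochhammer (b + of_nat j) k * pochhammer (- of_nat (n - j)) k
          / (fact k * pochhammer (c + of_nat j) k))" if "k \<le> n - j" for k
  proof -
    have "pochhammer (c + of_nat j) k \<noteq> 0"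
      using pochhammer_neq_0_mono[OF cjn that] .
    moreover have "pochhammer (- of_nat (j + k)) j = (-1) ^ j * fact (j + k) / (fact k :: 'a)"
      using pochhammer_minus_of_nat_add[of j k, where 'a='a] by (simp add: field_simps)
    ultimately show ?thesis
      unfolding A_def pochhammer_product' shift_n using cj by (simp add: field_simps)
  qed
  then have "(\<Sum>k\<le>n - j. pochhammer b (j + k) * pochhammer (- of_nat n) (j + k)
            / (pochhammer c (j + k) * fact (j + k))
            * pochhammer (1 + b - c - of_nat n) j * pochhammer (- of_nat (j + k)) j)
      = A * (\<Sum>k\<le>n - j. pochhammer (b + of_nat j) k * pochhammer (- of_nat (n - j)) k
          / (fact k * pochhammer (c + of_nat j) k))"
    by (simp add: sum_distrib_left)
  also have "\<dots> = A * (pochhammer (c - b) (n - j) / pochhammer (c + of_nat j) (n - j))"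
    using Vandermonde_pochhammer_atMost[OF cjn, of "b + of_nat j"] by simp
  also have "\<dots> = pochhammer b j * pochhammer (- of_nat n) j * pochhammer (c - b) n / pochhammer c n"
    unfolding A_def split_c pochhammer_split_reflect[OF \<open>j \<le> n\<close>, of "c - b"]
    using cj cjn by (simp add: field_simps)
  finally show ?thesis .
qed

theorem pfaff_saalschuetz:
  fixes a b c :: "'a::field_char_0"
  assumes c: "pochhammer c n \<noteq> 0" and cab: "pochhammer (c - a - b) n \<noteq> 0"
  shows "(\<Sum>m\<le>n. pochhammer a m * pochhammer b m * pochhammer (- of_nat n) m
            / (pochhammer c m * fact m * pochhammer (1 + a + b - c - of_nat n) m))
       = pochhammer (c - a) n * pochhammer (c - b) n / (pochhammer c n * pochhammer (c - a - b) n)"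
proof -
  define d where "d = 1 + a + b - c - of_nat n"
  define t where "t m = pochhammer b m * pochhammer (- of_nat n) m / (pochhammer c m * fact m)" for m
  have d_reflect: "pochhammer d n = (-1) ^ n * pochhammer (c - a - b) n"
    using pochhammer_reflect[of "c - a - b" n] by (simp add: d_def algebra_simps)
  have db_reflect: "pochhammer (d - b) n = (-1) ^ n * pochhammer (c - a) n"
    using pochhammer_reflect[of "c - a" n] by (simp add: d_def algebra_simps)
  have d: "pochhammer d n \<noteq> 0"
    using cab by (simp add: d_reflect)
  have dm: "pochhammer d m \<noteq> 0" if "m \<le> n" for m
    using pochhammer_neq_0_mono[OF d that] .
  have "(\<Sum>m\<le>n. pochhammer a m * pochhammer b m * pochhammer (- of_nat n) m
            / (pochhammer c m * fact m * pochhammer d m))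
      = (\<Sum>m\<le>n. t m * (pochhammer a m / pochhammer d m))"
    by (simp add: t_def field_simps)
  also have "\<dots> = (\<Sum>m\<le>n. \<Sum>j\<le>m. t m * (pochhammer (d - a) j * pochhammer (- of_nat m) j
                                         / (fact j * pochhammer d j)))"
  proof (rule sum.cong[OF refl])
    fix m assume "m \<in> {..n}"
    then have "pochhammer a m / pochhammer d m
        = (\<Sum>j\<le>m. pochhammer (d - a) j * pochhammer (- of_nat m) j / (fact j * pochhammer d j))"
      using Vandermonde_pochhammer_atMost[OF dm, of m "d - a"] by simp
    then show "t m * (pochhammer a m / pochhammer d m)
        = (\<Sum>j\<le>m. t m * (pochhammer (d - a) j * pochhammer (- of_nat m) j / (fact j * pochhammer d j)))"
      by (simp only: sum_distrib_left)
  qed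
  also have "\<dots> = (\<Sum>j\<le>n. \<Sum>k\<le>n - j. t (j + k) * (pochhammer (d - a) j * pochhammer (- of_nat (j + k)) j
                                         / (fact j * pochhammer d j)))"
    by (rule sum_atMost_triangle_swap)
  also have "\<dots> = (\<Sum>j\<le>n. pochhammer b j * pochhammer (- of_nat n) j / (fact j * pochhammer d j)
                     * (pochhammer (c - b) n / pochhammer c n))"
  proof (rule sum.cong[OF refl])
    fix j assume "j \<in> {..n}"
    then have "j \<le> n" by simp
    have "d - a = 1 + b - c - of_nat n" by (simp add: d_def)
    then have "(\<Sum>k\<le>n - j. t (j + k) * (pochhammer (d - a) j * pochhammer (- of_nat (j + k)) j
                                         / (fact j * pochhammer d j)))
        = (\<Sum>k\<le>n - j. t (j + k) * pochhammer (1 + b - c - of_nat n) j * pochhammer (- of_nat (j + k)) j)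
          / (fact j * pochhammer d j)"
      unfolding sum_divide_distrib by (simp add: mult_ac)
    then show "(\<Sum>k\<le>n - j. t (j + k) * (pochhammer (d - a) j * pochhammer (- of_nat (j + k)) j
                                         / (fact j * pochhammer d j)))
        = pochhammer b j * pochhammer (- of_nat n) j / (fact j * pochhammer d j)
                     * (pochhammer (c - b) n / pochhammer c n)"
      unfolding t_def saalschuetz_inner_sum[OF \<open>j \<le> n\<close> c] by simp
  qed
  also have "\<dots> = pochhammer (d - b) n / pochhammer d n * (pochhammer (c - b) n / pochhammer c n)"
    by (simp only: sum_distrib_right[symmetric] Vandermonde_pochhammer_atMost[OF d])
  also have "\<dots> = pochhammer (c - a) n * pochhammer (c - b) n / (pochhammer c n * pochhammer (c - a - b) n)"
    by (simp add: d_reflect db_reflect)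
  finally show ?thesis
    by (simp add: d_def)
qed

theorem corollary4p1:
  fixes N :: nat and a b c :: complex
  assumes "of_nat N + c - a - b \<noteq> 0"
    and "\<forall>m\<le>N. pochhammer c m \<noteq> 0"
    and "\<forall>m\<le>N. pochhammer (of_nat N * inverse (of_nat N / (of_nat N + c - a - b)) - of_nat m) m \<noteq> 0"
    and "pochhammer (c - a - b) N \<noteq> 0"
  shows "hyp2F1N N a b c (of_nat N / (of_nat N + c - a - b))
         = pochhammer (c - a) N * pochhammer (c - b) N / (pochhammer c N * pochhammer (c - a - b) N)"
proof (cases "N = 0")
  case True
  then show ?thesis by (simp add: hyp2F1N_def)
next
  case False
  with assms(1) have lower_param:
    "1 - of_nat N / (of_nat N / (of_nat N + c - a - b)) = 1 + a + b - c - of_nat N"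
    by simp
  show ?thesis
    unfolding hyp2F1N_eq_3F2_sum lower_param
    using pfaff_saalschuetz[of c N a b] assms(2,4) by simp
qed

end
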